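(* Let $\Omega_n=\dfrac{\pi^{n/2}}{\Gamma\left(\frac n2+1\right)}$ for $n\in\mathbb{N}_0$. Then \[ \sqrt{\frac{n+\frac12}{2\pi}+\frac1{16\pi n}-\frac1{32\pi n^2}-\frac5{256\pi n^3}}<\frac{\Omega_{n-1}}{\Omega_n} \] for every integer $n\ge1$, and \[ \frac{\Omega_{n-1}}{\Omega_n}<\sqrt{\frac{n+\frac12}{2\pi}+\frac1{16\pi n}-\frac1{32\pi n^2}} \] for every integer $n\ge2$.
   Context: $\Omega_n$ is the volume of the unit ball in $\mathbb{R}^n$ ($\Omega_0=1$); $\Gamma$ is Euler's gamma function. *)

theory Defs
  imports "HOL-Analysis.Analysis"
begin

definition Omega :: "nat \<Rightarrow> real" where
  "Omega n = pi powr (real n / 2) / Gamma (real n / 2 + 1)"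

end

theory Submission
  imports Defs "HOL-Real_Asymp.Real_Asymp"
begin

text \<open>
  Put \<open>F x = (\<Gamma>(x/2 + 1) / \<Gamma>(x/2 + 1/2))\<^sup>2\<close>, so that \<open>\<Omega>\<^sub>n\<^sub>-\<^sub>1 / \<Omega>\<^sub>n = sqrt (F n / \<pi>)\<close>.
  The functional equation of \<open>\<Gamma>\<close> gives \<open>F (x + 2) = F x (x + 2)\<^sup>2 / (x + 1)\<^sup>2\<close>, and
  log-convexity of \<open>\<Gamma>\<close> gives \<open>x/2 \<le> F x \<le> (x + 1)/2\<close>, so \<open>F / g \<rightarrow> 1\<close> whenever
  \<open>g x = x/2 + o(x)\<close>. If \<open>g\<close> satisfies the recurrence of \<open>F\<close> with a strict
  inequality, then \<open>F / g\<close> is strictly monotone along \<open>x, x + 2, x + 4, \<dots>\<close>, hence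
  \<open>F x\<close> lies strictly on one side of \<open>g x\<close>. For the two rational functions of the
  statement the strict recurrence inequality reduces to a polynomial inequality.
\<close>

lemma Gamma_plus1_pos: "x > 0 \<Longrightarrow> Gamma (x + 1) = x * Gamma x" for x :: real
  by (rule Gamma_plus1) (auto elim!: nonpos_Ints_cases)

lemma Gamma_midpoint_square_le:
  fixes a b :: real
  assumes "a > 0" "b > 0"
  shows "Gamma ((a + b) / 2) ^ 2 \<le> Gamma a * Gamma b"
proof -
  have "(ln \<circ> Gamma) ((1 - 1/2) *\<^sub>R a + (1/2) *\<^sub>R b)
          \<le> (1 - 1/2) * (ln \<circ> Gamma) a + (1/2) * (ln \<circ> Gamma) b"
    by (rule convex_onD[OF log_convex_Gamma_real]) (use assms in auto)
  moreover have "Gamma a > 0" "Gamma b > 0" "Gamma ((a + b) / 2) > 0"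
    using assms by auto
  ultimately have "ln (Gamma ((a + b) / 2) ^ 2) \<le> ln (Gamma a * Gamma b)"
    by (simp add: ln_mult ln_realpow field_simps)
  then show ?thesis
    using \<open>Gamma a > 0\<close> \<open>Gamma b > 0\<close> \<open>Gamma ((a + b) / 2) > 0\<close> by simp
qed

definition Gamma_half_ratio_sq :: "real \<Rightarrow> real" where
  "Gamma_half_ratio_sq x = (Gamma (x/2 + 1) / Gamma (x/2 + 1/2)) ^ 2"

lemma Gamma_half_ratio_sq_pos:
  assumes "x > 0"
  shows "Gamma_half_ratio_sq x > 0"
proof -
  have "Gamma (x/2 + 1) > 0" "Gamma (x/2 + 1/2) > 0"
    using assms by auto
  then show ?thesis
    unfolding Gamma_half_ratio_sq_def by simp
qed

lemma Gamma_half_ratio_sq_plus2: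
  assumes "x > 0"
  shows "Gamma_half_ratio_sq (x + 2) = Gamma_half_ratio_sq x * (x + 2)^2 / (x + 1)^2"
proof -
  have num: "Gamma ((x + 2)/2 + 1) = (x + 2)/2 * Gamma (x/2 + 1)"
    using Gamma_plus1_pos[of "x/2 + 1"] assms by (simp add: add_divide_distrib)
  have "Gamma ((x + 2)/2 + 1/2) = Gamma ((x/2 + 1/2) + 1)"
    by (simp add: field_simps)
  also have "\<dots> = (x + 1)/2 * Gamma (x/2 + 1/2)"
    using Gamma_plus1_pos[of "x/2 + 1/2"] assms by (simp add: add_divide_distrib)
  finally have den: "Gamma ((x + 2)/2 + 1/2) = (x + 1)/2 * Gamma (x/2 + 1/2)" .
  have "(x + 2)/2 * Gamma (x/2 + 1) / ((x + 1)/2 * Gamma (x/2 + 1/2))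
          = (x + 2) / (x + 1) * (Gamma (x/2 + 1) / Gamma (x/2 + 1/2))"
    by simp
  then show ?thesis
    unfolding Gamma_half_ratio_sq_def num den
    by (simp add: power_mult_distrib power_divide mult_ac)
qed

lemma Gamma_half_ratio_sq_bounds:
  assumes "x > 0"
  shows "x/2 \<le> Gamma_half_ratio_sq x" "Gamma_half_ratio_sq x \<le> (x + 1)/2"
proof -
  define y where "y = x/2"
  have y: "y > 0"
    using assms by (simp add: y_def)
  have "Gamma (y + 1/2) > 0"
    using y by auto
  then have pos: "Gamma (y + 1/2) ^ 2 > 0"
    by simp
  have F: "Gamma_half_ratio_sq x = Gamma (y + 1)^2 / Gamma (y + 1/2)^2"
    by (simp add: Gamma_half_ratio_sq_def y_def power_divide)
  have "Gamma (y + 1/2)^2 \<le> Gamma y * Gamma (y + 1)"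
    using Gamma_midpoint_square_le[of y "y + 1"] y by (simp add: add_divide_distrib)
  also have "\<dots> = Gamma (y + 1)^2 / y"
    using Gamma_plus1_pos[OF y] y by (simp add: power2_eq_square)
  finally have "y * Gamma (y + 1/2)^2 \<le> Gamma (y + 1)^2"
    using y by (simp add: le_divide_eq mult.commute)
  then have "y \<le> Gamma (y + 1)^2 / Gamma (y + 1/2)^2"
    by (subst pos_le_divide_eq[OF pos])
  then show "x/2 \<le> Gamma_half_ratio_sq x"
    by (simp add: F y_def)
  have mid: "((y + 1/2) + ((y + 1/2) + 1)) / 2 = y + 1"
    by simp
  have "Gamma (((y + 1/2) + ((y + 1/2) + 1)) / 2)^2 \<le> Gamma (y + 1/2) * Gamma ((y + 1/2) + 1)"
    by (rule Gamma_midpoint_square_le) (use y in simp_all)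
  then have "Gamma (y + 1)^2 \<le> Gamma (y + 1/2) * Gamma ((y + 1/2) + 1)"
    unfolding mid .
  also have "\<dots> = (y + 1/2) * Gamma (y + 1/2)^2"
    using Gamma_plus1_pos[of "y + 1/2"] y by (simp add: power2_eq_square)
  finally have "Gamma (y + 1)^2 / Gamma (y + 1/2)^2 \<le> y + 1/2"
    by (simp add: pos_divide_le_eq[OF pos])
  then show "Gamma_half_ratio_sq x \<le> (x + 1)/2"
    by (simp add: F y_def add_divide_distrib)
qed

lemma Omega_ratio:
  assumes "n \<ge> 1"
  shows "Omega (n - 1) / Omega n = sqrt (Gamma_half_ratio_sq (real n) / pi)"
proof -
  obtain m where n: "n = Suc m"
    using assms by (cases n) auto
  have "real n / 2 = real m / 2 + 1/2"
    by (simp add: n field_simps)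
  then have "Omega n = pi powr (real m / 2) * sqrt pi / Gamma (real n / 2 + 1)"
    unfolding Omega_def by (simp only: powr_add) (simp add: powr_half_sqrt)
  moreover have "real m / 2 + 1 = real n / 2 + 1/2"
    by (simp add: n field_simps)
  then have "Omega (n - 1) = pi powr (real m / 2) / Gamma (real n / 2 + 1/2)"
    unfolding Omega_def by (simp add: n)
  moreover have "Gamma (real n / 2 + 1/2) > 0" "Gamma (real n / 2 + 1) > 0"
    by auto
  ultimately show ?thesis
    by (simp add: Gamma_half_ratio_sq_def real_sqrt_divide real_sqrt_mult field_simps)
qed

lemma Gamma_half_ratio_sq_div_plus2:
  assumes "x > 0" "g x > 0" "g (x + 2) > 0"
  shows "Gamma_half_ratio_sq (x + 2) / g (x + 2)
           = Gamma_half_ratio_sq x / g x * ((x + 2)^2 * g x / ((x + 1)^2 * g (x + 2)))"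
  using assms by (simp add: Gamma_half_ratio_sq_plus2 field_simps)

lemma Gamma_half_ratio_sq_div_tendsto:
  assumes "x > 0" and pos: "\<And>y. y \<ge> x \<Longrightarrow> g y > 0"
    and lim_lower: "((\<lambda>y. y / (2 * g y)) \<longlongrightarrow> 1) at_top"
    and lim_upper: "((\<lambda>y. (y + 1) / (2 * g y)) \<longlongrightarrow> 1) at_top"
  shows "(\<lambda>k. Gamma_half_ratio_sq (x + 2 * real k) / g (x + 2 * real k)) \<longlonglongrightarrow> 1"
proof -
  have seq: "filterlim (\<lambda>k. x + 2 * real k) at_top sequentially"
    by real_asymp
  show ?thesis
  proof (rule tendsto_sandwich[OF _ _ filterlim_compose[OF lim_lower seq]
                                       filterlim_compose[OF lim_upper seq]])
    have "y / (2 * g y) \<le> Gamma_half_ratio_sq y / g y"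
      and "Gamma_half_ratio_sq y / g y \<le> (y + 1) / (2 * g y)" if "y \<ge> x" for y
      using Gamma_half_ratio_sq_bounds[of y] pos[OF that] that \<open>x > 0\<close>
      by (simp_all add: divide_simps)
    then show "\<forall>\<^sub>F k in sequentially. (x + 2 * real k) / (2 * g (x + 2 * real k))
                 \<le> Gamma_half_ratio_sq (x + 2 * real k) / g (x + 2 * real k)"
      and "\<forall>\<^sub>F k in sequentially. Gamma_half_ratio_sq (x + 2 * real k) / g (x + 2 * real k)
                 \<le> (x + 2 * real k + 1) / (2 * g (x + 2 * real k))"
      by (simp_all add: always_eventually)
  qed
qed

lemma less_Gamma_half_ratio_sq:
  assumes "x > 0" and pos: "\<And>y. y \<ge> x \<Longrightarrow> g y > 0"
    and step: "\<And>y. y \<ge> x \<Longrightarrow> (y + 2)^2 * g y < (y + 1)^2 * g (y + 2)"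
    and "((\<lambda>y. y / (2 * g y)) \<longlongrightarrow> 1) at_top"
    and "((\<lambda>y. (y + 1) / (2 * g y)) \<longlongrightarrow> 1) at_top"
  shows "g x < Gamma_half_ratio_sq x"
proof -
  define t where "t k = Gamma_half_ratio_sq (x + 2 * real k) / g (x + 2 * real k)" for k
  have t_decr: "t (Suc k) < t k" for k
  proof -
    define y where "y = x + 2 * real k"
    have y: "y \<ge> x" "y > 0" "g y > 0" "g (y + 2) > 0"
      using pos \<open>x > 0\<close> by (auto simp: y_def)
    have t: "t k = Gamma_half_ratio_sq y / g y" "t (Suc k) = Gamma_half_ratio_sq (y + 2) / g (y + 2)"
      by (simp_all add: t_def y_def algebra_simps)
    have c: "(y + 2)^2 * g y / ((y + 1)^2 * g (y + 2)) < 1"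
      using step[OF y(1)] y by (simp add: divide_simps)
    have "t k > 0"
      using Gamma_half_ratio_sq_pos y by (simp add: t)
    from mult_strict_left_mono[OF c this] show ?thesis
      unfolding t Gamma_half_ratio_sq_div_plus2[OF y(2-4)] by simp
  qed
  have "decseq t"
    using t_decr by (simp add: decseq_Suc_iff less_imp_le)
  moreover have "t \<longlonglongrightarrow> 1"
    unfolding t_def using assms by (intro Gamma_half_ratio_sq_div_tendsto)
  ultimately have "1 \<le> t 1"
    by (rule decseq_ge)
  then have "1 < t 0"
    using t_decr[of 0] by simp
  then show ?thesis
    using pos[of x] by (simp add: t_def)
qed

lemma Gamma_half_ratio_sq_less:
  assumes "x > 0" and pos: "\<And>y. y \<ge> x \<Longrightarrow> g y > 0"
    and step: "\<And>y. y \<ge> x \<Longrightarrow> (y + 1)^2 * g (y + 2) < (y + 2)^2 * g y"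
    and "((\<lambda>y. y / (2 * g y)) \<longlongrightarrow> 1) at_top"
    and "((\<lambda>y. (y + 1) / (2 * g y)) \<longlongrightarrow> 1) at_top"
  shows "Gamma_half_ratio_sq x < g x"
proof -
  define t where "t k = Gamma_half_ratio_sq (x + 2 * real k) / g (x + 2 * real k)" for k
  have t_incr: "t k < t (Suc k)" for k
  proof -
    define y where "y = x + 2 * real k"
    have y: "y \<ge> x" "y > 0" "g y > 0" "g (y + 2) > 0"
      using pos \<open>x > 0\<close> by (auto simp: y_def)
    have t: "t k = Gamma_half_ratio_sq y / g y" "t (Suc k) = Gamma_half_ratio_sq (y + 2) / g (y + 2)"
      by (simp_all add: t_def y_def algebra_simps)
    have c: "1 < (y + 2)^2 * g y / ((y + 1)^2 * g (y + 2))"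
      using step[OF y(1)] y by (simp add: divide_simps)
    have "t k > 0"
      using Gamma_half_ratio_sq_pos y by (simp add: t)
    from mult_strict_left_mono[OF c this] show ?thesis
      unfolding t Gamma_half_ratio_sq_div_plus2[OF y(2-4)] by simp
  qed
  have "incseq t"
    using t_incr by (simp add: incseq_Suc_iff less_imp_le)
  moreover have "t \<longlonglongrightarrow> 1"
    unfolding t_def using assms by (intro Gamma_half_ratio_sq_div_tendsto)
  ultimately have "t 1 \<le> 1"
    by (rule incseq_le)
  then have "t 0 < 1"
    using t_incr[of 0] by simp
  then show ?thesis
    using pos[of x] by (simp add: t_def)
qed

text \<open>\<open>\<pi>\<close> times the squares of the bounds in the theorem.\<close>

definition wallis_lower :: "real \<Rightarrow> real" where
  "wallis_lower x = (x + 1/2) / 2 + 1 / (16*x) - 1 / (32*x^2) - 5 / (256*x^3)"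

definition wallis_upper :: "real \<Rightarrow> real" where
  "wallis_upper x = (x + 1/2) / 2 + 1 / (16*x) - 1 / (32*x^2)"

lemma wallis_lower_pos:
  assumes "x \<ge> 1"
  shows "wallis_lower x > 0"
proof -
  have "1 / (32*x^2) \<le> 1 / (16*x)"
    using assms by (simp add: divide_simps power2_eq_square)
  moreover have "5 / (256*x^3) < (x + 1/2) / 2"
  proof -
    have "5 / (256*x^3) \<le> 5/256"
      using assms by (simp add: divide_simps one_le_power)
    then show ?thesis
      using assms by argo
  qed
  ultimately show ?thesis
    unfolding wallis_lower_def by linarith
qed

lemma wallis_upper_pos:
  assumes "x \<ge> 1"
  shows "wallis_upper x > 0"
proof -
  have "wallis_upper x = wallis_lower x + 5 / (256*x^3)"
    by (simp add: wallis_lower_def wallis_upper_def)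
  then show ?thesis
    using wallis_lower_pos[OF assms] assms by (auto intro!: add_pos_pos)
qed

lemma wallis_lower_step:
  assumes "x > 0"
  shows "(x + 2)^2 * wallis_lower x < (x + 1)^2 * wallis_lower (x + 2)"
proof -
  have "x \<noteq> 0" "x + 2 \<noteq> 0"
    using assms by auto
  then have "(x + 1)^2 * wallis_lower (x + 2) - (x + 2)^2 * wallis_lower x
               = (115*x^3 + 528*x^2 + 656*x + 160) / (256 * x^3 * (x + 2)^3)"
    unfolding wallis_lower_def by (simp add: divide_simps) algebra
  also have "\<dots> > 0"
    using assms by (auto intro!: divide_pos_pos add_pos_pos)
  finally show ?thesis
    by simp
qed

lemma wallis_upper_step:
  assumes "x \<ge> 2"
  shows "(x + 1)^2 * wallis_upper (x + 2) < (x + 2)^2 * wallis_upper x"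
proof -
  have "x \<noteq> 0" "x + 2 \<noteq> 0"
    using assms by auto
  then have "(x + 2)^2 * wallis_upper x - (x + 1)^2 * wallis_upper (x + 2)
               = (5*x^2 - 16) / (32 * x^2 * (x + 2)^2)"
    unfolding wallis_upper_def by (simp add: divide_simps) algebra
  also have "\<dots> > 0"
    using assms power_mono[OF assms, of 2] by simp
  finally show ?thesis
    by simp
qed

lemma wallis_lower_less_Gamma_half_ratio_sq:
  assumes "x \<ge> 1"
  shows "wallis_lower x < Gamma_half_ratio_sq x"
proof (rule less_Gamma_half_ratio_sq)
  show "((\<lambda>y. y / (2 * wallis_lower y)) \<longlongrightarrow> 1) at_top"
    and "((\<lambda>y. (y + 1) / (2 * wallis_lower y)) \<longlongrightarrow> 1) at_top"
    unfolding wallis_lower_def by real_asymp+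
qed (use assms wallis_lower_pos wallis_lower_step in auto)

lemma Gamma_half_ratio_sq_less_wallis_upper:
  assumes "x \<ge> 2"
  shows "Gamma_half_ratio_sq x < wallis_upper x"
proof (rule Gamma_half_ratio_sq_less)
  show "((\<lambda>y. y / (2 * wallis_upper y)) \<longlongrightarrow> 1) at_top"
    and "((\<lambda>y. (y + 1) / (2 * wallis_upper y)) \<longlongrightarrow> 1) at_top"
    unfolding wallis_upper_def by real_asymp+
qed (use assms wallis_upper_pos wallis_upper_step in auto)

theorem theorem11:
  shows "(\<forall>n::nat. n \<ge> 1 \<longrightarrow>
            sqrt ((real n + 1/2) / (2*pi) + 1 / (16*pi*real n) - 1 / (32*pi*(real n)^2)
                  - 5 / (256*pi*(real n)^3)) < Omega (n - 1) / Omega n)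
       \<and> (\<forall>n::nat. n \<ge> 2 \<longrightarrow>
            Omega (n - 1) / Omega n <
            sqrt ((real n + 1/2) / (2*pi) + 1 / (16*pi*real n) - 1 / (32*pi*(real n)^2)))"
proof safe
  fix n :: nat
  assume n: "n \<ge> 1"
  have "(real n + 1/2) / (2*pi) + 1 / (16*pi*real n) - 1 / (32*pi*(real n)^2)
          - 5 / (256*pi*(real n)^3) = wallis_lower (real n) / pi"
    by (simp add: wallis_lower_def field_simps)
  then show "sqrt ((real n + 1/2) / (2*pi) + 1 / (16*pi*real n) - 1 / (32*pi*(real n)^2)
                 - 5 / (256*pi*(real n)^3)) < Omega (n - 1) / Omega n"
    unfolding Omega_ratio[OF n] using wallis_lower_less_Gamma_half_ratio_sq[of n] n
    by (simp add: divide_strict_right_mono)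
next
  fix n :: nat
  assume n: "n \<ge> 2"
  then have "n \<ge> 1"
    by simp
  have "(real n + 1/2) / (2*pi) + 1 / (16*pi*real n) - 1 / (32*pi*(real n)^2)
          = wallis_upper (real n) / pi"
    by (simp add: wallis_upper_def field_simps)
  then show "Omega (n - 1) / Omega n
                 < sqrt ((real n + 1/2) / (2*pi) + 1 / (16*pi*real n) - 1 / (32*pi*(real n)^2))"
    unfolding Omega_ratio[OF \<open>n \<ge> 1\<close>] using Gamma_half_ratio_sq_less_wallis_upper[of n] n
    by (simp add: divide_strict_right_mono)
qed

end
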